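(* Let $F$ be the elementary cellular automaton with rule number 132. Then $D(\textsc{Pred}_{F,n})=O(\log n)$.
   Context: An elementary cellular automaton (ECA) with rule number $N\in\{0,\dots,255\}$ is the map $F:\{0,1\}^{\mathbb Z}\to\{0,1\}^{\mathbb Z}$ given by $F(x)_i=f(x_{i-1},x_i,x_{i+1})$. Here the local rule $f:\{0,1\}^3\to\{0,1\}$ is determined by $N=\sum_{a,b,c\in\{0,1\}}2^{4a+2b+c}f(a,b,c)$. On a finite word of length $m\ge 3$, $F$ produces the word of length $m-2$ obtained by applying $f$ at every position whose full neighbourhood lies in the word. For $n\ge1$, $\textsc{Pred}_{F,n}:\{0,1\}^{2n+1}\to\{0,1\}$ maps a word $x=x_{-n}\cdots x_n$ to the single letter of $F^n(x)$, i.e. the state of the central cell after $n$ steps. For a function $g:X\times Y\to Z$, $D(g)$ is the minimal depth of a deterministic two-party protocol computing $g$. In such a protocol, Alice knows $x$ and Bob knows $y$. The protocol is a binary tree: each internal node is labelled by a function of Alice's input only or of Bob's input only, with values in $\{\text{left},\text{right}\}$, and each leaf is labelled by an output value. For $g:\{0,1\}^m\to Z$, set $D(g)=\max_{0\le i<m}D(g_i)$, where $g_i:\{0,1\}^i\times\{0,1\}^{m-i}\to Z$ is $g_i(x,y)=g(xy)$. *)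

theory Defs
  imports Complex_Main "HOL-Library.Landau_Symbols"
begin

definition eca_local :: "nat \<Rightarrow> bool \<Rightarrow> bool \<Rightarrow> bool \<Rightarrow> bool" where
  "eca_local N a b c = bit N (4 * of_bool a + 2 * of_bool b + of_bool c)"

definition eca_step :: "nat \<Rightarrow> bool list \<Rightarrow> bool list" where
  "eca_step N w = map (\<lambda>i. eca_local N (w ! i) (w ! (i+1)) (w ! (i+2))) [0..<length w - 2]"

(* Pred_{F,n}: word x_{-n}..x_n (list of length 2n+1, index k = cell k-n) to the letter of F^n(x) *)
definition pred :: "nat \<Rightarrow> nat \<Rightarrow> bool list \<Rightarrow> bool" where
  "pred N n x = hd ((eca_step N ^^ n) x)"

datatype ('x, 'y, 'z) protocol =
    Leaf 'z
  | AliceNode "'x \<Rightarrow> bool" "('x, 'y, 'z) protocol" "('x, 'y, 'z) protocol"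
  | BobNode "'y \<Rightarrow> bool" "('x, 'y, 'z) protocol" "('x, 'y, 'z) protocol"

fun run :: "('x, 'y, 'z) protocol \<Rightarrow> 'x \<Rightarrow> 'y \<Rightarrow> 'z" where
  "run (Leaf z) x y = z"
| "run (AliceNode a l r) x y = (if a x then run l x y else run r x y)"
| "run (BobNode b l r) x y = (if b y then run l x y else run r x y)"

fun depth :: "('x, 'y, 'z) protocol \<Rightarrow> nat" where
  "depth (Leaf z) = 0"
| "depth (AliceNode a l r) = Suc (max (depth l) (depth r))"
| "depth (BobNode b l r) = Suc (max (depth l) (depth r))"

definition comm_complexity :: "'x set \<Rightarrow> 'y set \<Rightarrow> ('x \<Rightarrow> 'y \<Rightarrow> 'z) \<Rightarrow> nat" where
  "comm_complexity X Y g =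
     (LEAST d. \<exists>p :: ('x, 'y, 'z) protocol. depth p = d \<and> (\<forall>x\<in>X. \<forall>y\<in>Y. run p x y = g x y))"

definition word_comm_complexity :: "nat \<Rightarrow> (bool list \<Rightarrow> 'z) \<Rightarrow> nat" where
  "word_comm_complexity m g =
     Max ((\<lambda>i. comm_complexity {x. length x = i} {y. length y = m - i} (\<lambda>x y. g (x @ y))) ` {0..<m})"

end

theory Submission
  imports Defs "HOL-Real_Asymp.Real_Asymp"
begin

(*
  Rule 132 is the local rule f(a,b,c) = b \<and> (a = c): a cell keeps state 1 exactly when
  its two neighbours agree, and 0 is absorbing.  Consequently every maximal block of ones
  loses one cell at each end per step.  We show by induction on t that cell p of a word w
  is 1 after t steps iff w!p = 1 and the runs of ones immediately left and right of p,
  truncated at length t, have equal length (predicate survives).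

  For Pred_{F,n} and a split of the (2n+1)-letter input between Alice and Bob, the party
  who does not hold the central cell only influences the result through the length of
  the run of ones at the end of its word adjacent to the split.  It sends this number
  (less than 2n+2) in binary, after which the other party knows the answer and announces
  it with one more bit.  Hence D(Pred_{F,n}) \<le> log2(2n+2) + 2 = O(log n).
*)

definition leading_ones :: "bool list \<Rightarrow> nat" where
  "leading_ones w = length (takeWhile id w)"

definition trailing_ones :: "bool list \<Rightarrow> nat" where
  "trailing_ones w = length (takeWhile id (rev w))"

lemma leading_ones_Cons [simp]: "leading_ones (b # w) = (if b then Suc (leading_ones w) else 0)"
  by (simp add: leading_ones_def)

lemma trailing_ones_snoc [simp]: "trailing_ones (w @ [b]) = (if b then Suc (trailing_ones w) else 0)"
  by (simp add: trailing_ones_def)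

lemma leading_ones_le: "leading_ones w \<le> length w"
  by (simp add: leading_ones_def length_takeWhile_le)

lemma trailing_ones_le: "trailing_ones w \<le> length w"
  using length_takeWhile_le[of id "rev w"] by (simp add: trailing_ones_def)

lemma leading_ones_append:
  "leading_ones (u @ v) = (if \<forall>b\<in>set u. b then length u + leading_ones v else leading_ones u)"
  by (auto simp: leading_ones_def takeWhile_append)

lemma trailing_ones_append:
  "trailing_ones (u @ v) = (if \<forall>b\<in>set v. b then length v + trailing_ones u else trailing_ones v)"
  by (auto simp: trailing_ones_def takeWhile_append)

(* survives w p t: cell p carries a one and the runs of ones directly to its left and
   right, truncated at t, are equally long.  This is the state of cell p after t steps. *)
definition survives :: "bool list \<Rightarrow> nat \<Rightarrow> nat \<Rightarrow> bool" where
  "survives w p t \<longleftrightarrow>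
     w ! p \<and> min (trailing_ones (take p w)) t = min (leading_ones (drop (Suc p) w)) t"

(* The Boolean/arithmetic core of the induction step: a = w!(p-1), b = w!p, c = w!(p+1),
   A and B the runs of ones beyond p-1 and p+1. *)
lemma survives_Suc_arith:
  fixes a b c :: bool and A B t :: nat
  shows "(b \<and> min (if a then Suc A else 0) (Suc t) = min (if c then Suc B else 0) (Suc t)) \<longleftrightarrow>
    (b \<and> min (if a then Suc A else 0) t = min (if c then Suc B else 0) t) \<and>
    ((a \<and> min A t = min (if b then Suc (if c then Suc B else 0) else 0) t) \<longleftrightarrow>
     (c \<and> min (if b then Suc (if a then Suc A else 0) else 0) t = min B t))"
  by (cases a; cases b; cases c) (auto simp: min_def)

lemma survives_Suc:
  assumes "0 < p" "Suc p < length w"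
  shows "survives w p (Suc t) \<longleftrightarrow>
    survives w p t \<and> (survives w (p - 1) t \<longleftrightarrow> survives w (Suc p) t)"
proof -
  have take_p: "take p w = take (p - 1) w @ [w ! (p - 1)]"
    using assms by (metis Suc_diff_1 Suc_lessD take_Suc_conv_app_nth)
  have take_Suc_p: "take (Suc p) w = take p w @ [w ! p]"
    using assms by (simp add: take_Suc_conv_app_nth)
  have drop_p: "drop (Suc p) w = w ! Suc p # drop (Suc (Suc p)) w"
    using assms by (simp add: Cons_nth_drop_Suc)
  have drop_p_minus: "drop p w = w ! p # drop (Suc p) w"
    using assms by (simp add: Cons_nth_drop_Suc)
  show ?thesis
    unfolding survives_def Suc_diff_1[OF assms(1)] take_Suc_p drop_p_minus
    unfolding trailing_ones_snoc leading_ones_Cons unfolding take_p drop_p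
    unfolding trailing_ones_snoc leading_ones_Cons
    by (rule survives_Suc_arith)
qed

lemma eca_local_132: "eca_local 132 a b c \<longleftrightarrow> b \<and> (a \<longleftrightarrow> c)"
  by (cases a; cases b; cases c) (simp_all add: eca_local_def bit_iff_odd)

lemma length_eca_iter: "length ((eca_step N ^^ t) w) = length w - 2 * t"
  by (induction t) (simp_all add: eca_step_def)

lemma eca_step_132_nth:
  "i < length w - 2 \<Longrightarrow> eca_step 132 w ! i \<longleftrightarrow> w ! (i + 1) \<and> (w ! i \<longleftrightarrow> w ! (i + 2))"
  by (simp add: eca_step_def eca_local_132)

lemma eca_iter_132_nth:
  "j + 2 * t < length w \<Longrightarrow> (eca_step 132 ^^ t) w ! j \<longleftrightarrow> survives w (j + t) t"
proof (induction t arbitrary: j)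
  case 0
  then show ?case by (simp add: survives_def)
next
  case (Suc t)
  let ?u = "(eca_step 132 ^^ t) w"
  have "j < length ?u - 2"
    using Suc.prems by (simp add: length_eca_iter)
  then have "(eca_step 132 ^^ Suc t) w ! j \<longleftrightarrow> ?u ! (j + 1) \<and> (?u ! j \<longleftrightarrow> ?u ! (j + 2))"
    by (simp add: eca_step_132_nth)
  also have "\<dots> \<longleftrightarrow> survives w (j + t + 1) t \<and>
      (survives w (j + t) t \<longleftrightarrow> survives w (j + t + 2) t)"
    using Suc.prems Suc.IH[of j] Suc.IH[of "j + 1"] Suc.IH[of "j + 2"] by simp
  also have "\<dots> \<longleftrightarrow> survives w (j + Suc t) (Suc t)"
    using Suc.prems survives_Suc[of "j + t + 1" w t] by simp
  finally show ?case .
qed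

lemma pred_132_eq_survives: "length w = 2 * n + 1 \<Longrightarrow> pred 132 n w \<longleftrightarrow> survives w n n"
proof -
  assume len: "length w = 2 * n + 1"
  then have "(eca_step 132 ^^ n) w \<noteq> []"
    using length_eca_iter[where N = 132 and t = n and w = w] by auto
  then have "pred 132 n w = (eca_step 132 ^^ n) w ! 0"
    by (simp add: pred_def hd_conv_nth)
  then show ?thesis
    using len eca_iter_132_nth[of 0 n w] by simp
qed

lemma survives_append_left:
  assumes "length x' = length x" "length x \<le> p" "trailing_ones x' = trailing_ones x"
  shows "survives (x' @ y) p t \<longleftrightarrow> survives (x @ y) p t"
  using assms by (auto simp: survives_def nth_append trailing_ones_append)

lemma survives_append_right:
  assumes "p < length x" "leading_ones y' = leading_ones y"
  shows "survives (x @ y') p t \<longleftrightarrow> survives (x @ y) p t"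
  using assms by (auto simp: survives_def nth_append leading_ones_append)

(* Alice transmits the lowest k bits of s x, most significant first; the received value
   is accumulated in acc and the protocol continues with f acc. *)
fun alice_sends :: "nat \<Rightarrow> ('x \<Rightarrow> nat) \<Rightarrow> (nat \<Rightarrow> ('x, 'y, 'z) protocol) \<Rightarrow> nat \<Rightarrow> ('x, 'y, 'z) protocol" where
  "alice_sends 0 s f acc = f acc"
| "alice_sends (Suc k) s f acc =
     AliceNode (\<lambda>x. bit (s x) k) (alice_sends k s f (acc + 2 ^ k)) (alice_sends k s f acc)"

fun bob_sends :: "nat \<Rightarrow> ('y \<Rightarrow> nat) \<Rightarrow> (nat \<Rightarrow> ('x, 'y, 'z) protocol) \<Rightarrow> nat \<Rightarrow> ('x, 'y, 'z) protocol" where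
  "bob_sends 0 s f acc = f acc"
| "bob_sends (Suc k) s f acc =
     BobNode (\<lambda>y. bit (s y) k) (bob_sends k s f (acc + 2 ^ k)) (bob_sends k s f acc)"

lemma mod_double_power_bit: "(m :: nat) mod (2 * 2 ^ k) = 2 ^ k * of_bool (bit m k) + m mod 2 ^ k"
  using take_bit_Suc_from_most[of k m] by (simp add: take_bit_eq_mod)

lemma run_alice_sends: "run (alice_sends k s f acc) x y = run (f (acc + s x mod 2 ^ k)) x y"
  by (induction k arbitrary: acc) (auto simp: mod_double_power_bit add.assoc)

lemma run_bob_sends: "run (bob_sends k s f acc) x y = run (f (acc + s y mod 2 ^ k)) x y"
  by (induction k arbitrary: acc) (auto simp: mod_double_power_bit add.assoc)

lemma depth_alice_sends: "(\<And>v. depth (f v) \<le> d) \<Longrightarrow> depth (alice_sends k s f acc) \<le> k + d"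
  by (induction k arbitrary: acc) auto

lemma depth_bob_sends: "(\<And>v. depth (f v) \<le> d) \<Longrightarrow> depth (bob_sends k s f acc) \<le> k + d"
  by (induction k arbitrary: acc) auto

lemma comm_complexity_le_depth:
  "(\<And>x y. x \<in> X \<Longrightarrow> y \<in> Y \<Longrightarrow> run p x y = g x y) \<Longrightarrow> comm_complexity X Y g \<le> depth p"
  unfolding comm_complexity_def by (rule Least_le) blast

(* A Boolean function whose dependence on Alice's input factors through a summary with
   fewer than 2^k values has complexity at most k + 1: Alice sends the summary, Bob
   answers with the result. *)
lemma comm_complexity_alice_summary:
  fixes g :: "'x \<Rightarrow> 'y \<Rightarrow> bool" and s :: "'x \<Rightarrow> nat"
  assumes bound: "\<And>x. x \<in> X \<Longrightarrow> s x < 2 ^ k"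
    and summary: "\<And>x x' y. x \<in> X \<Longrightarrow> x' \<in> X \<Longrightarrow> y \<in> Y \<Longrightarrow> s x' = s x \<Longrightarrow> g x' y = g x y"
  shows "comm_complexity X Y g \<le> Suc k"
proof -
  define h where "h v y = g (SOME x. x \<in> X \<and> s x = v) y" for v y
  have factor: "g x y = h (s x) y" if "x \<in> X" "y \<in> Y" for x y
  proof -
    have "(SOME x'. x' \<in> X \<and> s x' = s x) \<in> X \<and> s (SOME x'. x' \<in> X \<and> s x' = s x) = s x"
      using that by (intro someI) auto
    then show ?thesis
      unfolding h_def using that summary by metis
  qed
  define p :: "('x, 'y, bool) protocol"
    where "p = alice_sends k s (\<lambda>v. BobNode (h v) (Leaf True) (Leaf False)) 0"
  have "run p x y = g x y" if "x \<in> X" "y \<in> Y" for x y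
    using that bound factor by (simp add: p_def run_alice_sends)
  then have "comm_complexity X Y g \<le> depth p"
    by (rule comm_complexity_le_depth)
  also have "\<dots> \<le> k + 1"
    unfolding p_def by (rule depth_alice_sends) simp
  finally show ?thesis by simp
qed

lemma comm_complexity_bob_summary:
  fixes g :: "'x \<Rightarrow> 'y \<Rightarrow> bool" and s :: "'y \<Rightarrow> nat"
  assumes bound: "\<And>y. y \<in> Y \<Longrightarrow> s y < 2 ^ k"
    and summary: "\<And>x y y'. x \<in> X \<Longrightarrow> y \<in> Y \<Longrightarrow> y' \<in> Y \<Longrightarrow> s y' = s y \<Longrightarrow> g x y' = g x y"
  shows "comm_complexity X Y g \<le> Suc k"
proof -
  define h where "h x v = g x (SOME y. y \<in> Y \<and> s y = v)" for x v
  have factor: "g x y = h x (s y)" if "x \<in> X" "y \<in> Y" for x y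
  proof -
    have "(SOME y'. y' \<in> Y \<and> s y' = s y) \<in> Y \<and> s (SOME y'. y' \<in> Y \<and> s y' = s y) = s y"
      using that by (intro someI) auto
    then show ?thesis
      unfolding h_def using that summary by metis
  qed
  define p :: "('x, 'y, bool) protocol"
    where "p = bob_sends k s (\<lambda>v. AliceNode (\<lambda>x. h x v) (Leaf True) (Leaf False)) 0"
  have "run p x y = g x y" if "x \<in> X" "y \<in> Y" for x y
    using that bound factor by (simp add: p_def run_bob_sends)
  then have "comm_complexity X Y g \<le> depth p"
    by (rule comm_complexity_le_depth)
  also have "\<dots> \<le> k + 1"
    unfolding p_def by (rule depth_bob_sends) simp
  finally show ?thesis by simp
qed

(* Every split of the input of Pred_{132,n} costs at most k + 1 bits once 2n + 1 < 2^k: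
   the party not holding the centre sends its run of ones adjacent to the split. *)
lemma pred_132_split_complexity:
  assumes k: "2 * n + 1 < (2 :: nat) ^ k" and i: "i < 2 * n + 1"
  shows "comm_complexity {x. length x = i} {y. length y = 2 * n + 1 - i}
           (\<lambda>x y. pred 132 n (x @ y)) \<le> Suc k"
proof (cases "i \<le> n")
  case True
  show ?thesis
  proof (rule comm_complexity_alice_summary[where s = trailing_ones])
    fix x :: "bool list" assume "x \<in> {x. length x = i}"
    then show "trailing_ones x < 2 ^ k"
      using trailing_ones_le[of x] k i by simp
  next
    fix x x' y :: "bool list"
    assume "x \<in> {x. length x = i}" "x' \<in> {x. length x = i}" "y \<in> {y. length y = 2 * n + 1 - i}"
      and "trailing_ones x' = trailing_ones x"
    then have "length (x' @ y) = 2 * n + 1" "length (x @ y) = 2 * n + 1"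
      and "survives (x' @ y) n n \<longleftrightarrow> survives (x @ y) n n"
      using True i survives_append_left[of x' x n y n] by auto
    then show "pred 132 n (x' @ y) = pred 132 n (x @ y)"
      by (simp only: pred_132_eq_survives)
  qed
next
  case False
  show ?thesis
  proof (rule comm_complexity_bob_summary[where s = leading_ones])
    fix y :: "bool list" assume "y \<in> {y. length y = 2 * n + 1 - i}"
    then show "leading_ones y < 2 ^ k"
      using leading_ones_le[of y] k by simp
  next
    fix x y y' :: "bool list"
    assume "x \<in> {x. length x = i}" "y \<in> {y. length y = 2 * n + 1 - i}"
      "y' \<in> {y. length y = 2 * n + 1 - i}" and "leading_ones y' = leading_ones y"
    then have "length (x @ y') = 2 * n + 1" "length (x @ y) = 2 * n + 1"
      and "survives (x @ y') n n \<longleftrightarrow> survives (x @ y) n n"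
      using False i survives_append_right[of n x y' y n] by auto
    then show "pred 132 n (x @ y') = pred 132 n (x @ y)"
      by (simp only: pred_132_eq_survives)
  qed
qed

lemma pred_132_complexity_le:
  assumes "2 * n + 1 < (2 :: nat) ^ k"
  shows "word_comm_complexity (2 * n + 1) (pred 132 n) \<le> Suc k"
  unfolding word_comm_complexity_def
  using pred_132_split_complexity[OF assms] by (subst Max_le_iff) auto

lemma pred_132_complexity_log:
  "real (word_comm_complexity (2 * n + 1) (pred 132 n)) \<le> log 2 (real (2 * n + 2)) + 2"
proof -
  define l where "l = log 2 (real (2 * n + 2))"
  define k where "k = nat \<lceil>l\<rceil>"
  have "l \<ge> 0"
    by (simp add: l_def)
  then have k_real: "real k = of_int \<lceil>l\<rceil>"
    by (simp add: k_def)
  have "real (2 * n + 2) = 2 powr l"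
    by (simp add: l_def)
  also have "\<dots> \<le> 2 powr real k"
    using k_real by (intro powr_mono) auto
  also have "\<dots> = real (2 ^ k)"
    by (simp add: powr_realpow)
  finally have "2 * n + 1 < (2 :: nat) ^ k"
    by linarith
  then have "word_comm_complexity (2 * n + 1) (pred 132 n) \<le> Suc k"
    by (rule pred_132_complexity_le)
  then have "real (word_comm_complexity (2 * n + 1) (pred 132 n)) \<le> real k + 1"
    by simp
  also have "\<dots> \<le> l + 2"
    using k_real of_int_ceiling_le_add_one[of l] by linarith
  finally show ?thesis
    by (simp add: l_def)
qed

theorem mainTheorem17:
  shows "(\<lambda>n. real (word_comm_complexity (2 * n + 1) (pred 132 n))) \<in> O(\<lambda>n. ln (real n))"
proof -
  have "(\<lambda>n. real (word_comm_complexity (2 * n + 1) (pred 132 n)))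
          \<in> O(\<lambda>n. log 2 (real (2 * n + 2)) + 2)"
    using pred_132_complexity_log by (intro landau_o.big_mono always_eventually allI) simp
  also have "(\<lambda>n. log 2 (real (2 * n + 2)) + 2) \<in> O(\<lambda>n. ln (real n))"
    by real_asymp
  finally show ?thesis .
qed

end
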